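(* Let $n\ge 2$, $m\ge 1$, let $\mathcal{R}=(r_{li})$ be an $(n+1)\times(n+1)$ normalized orthogonal matrix, let $\mathcal{A}\in S_{m,n+1}$ and $\mathcal{B}=\mathcal{R}^m\mathcal{A}$. Then $\mathcal{A}$ is completely decomposable if and only if $\mathcal{B}$ is completely decomposable, and $\mathcal{A}$ is regularly decomposable if and only if $\mathcal{B}$ is regularly decomposable.
   Context: $S_{m,n+1}$ is the space of real symmetric tensors $\mathcal{A}=(a_{i_1\ldots i_m})$ of order $m$ and dimension $n+1$, indices in $\{0,\ldots,n\}$; vectors are $\mathbf{x}=(x_0,\ldots,x_n)^\top$. A normalized orthogonal matrix is a matrix of the form $\mathcal{R}=\begin{pmatrix}1&\mathbf{0}^\top\\ \mathbf{0}&R\end{pmatrix}$ with $R$ an $n\times n$ real orthogonal matrix. $\mathcal{B}=\mathcal{R}^m\mathcal{A}$ means $b_{l_1\ldots l_m}=\sum_{i_1,\ldots,i_m=0}^n a_{i_1\ldots i_m}r_{l_1i_1}\cdots r_{l_mi_m}$. $\mathcal{A}$ is completely decomposable if $\mathcal{A}=\sum_{k=1}^r(\mathbf{u}^{(k)})^{\otimes m}$ for some $\mathbf{u}^{(k)}\in\mathbb{R}^{n+1}$, where $\mathbf{u}^{\otimes m}$ has entries $u_{i_1}\cdots u_{i_m}$. A vector $\mathbf{x}$ is regular if $x_0\ne0$ and $x_0^2=x_1^2+\cdots+x_n^2$. Row tensors: $\mathcal{A}_i=(a_{ii_2\ldots i_m})\in S_{m-1,n+1}$. Regularly decomposable: for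 even $m=2l$, $\mathcal{A}=\sum_{k=1}^r(\mathbf{u}^{(k)})^{\otimes m}$ with all $\mathbf{u}^{(k)}$ regular; for odd $m=2l+1$, $\mathcal{A}_0=\sum_{k=1}^r(\mathbf{u}^{(k)})^{\otimes 2l}$ with all $\mathbf{u}^{(k)}$ regular and $\mathcal{A}_i=\sum_{k=1}^r\frac{u^{(k)}_i}{u^{(k)}_0}(\mathbf{u}^{(k)})^{\otimes 2l}$ for $i=1,\ldots,n$. *)

theory Defs
  imports Complex_Main "HOL-Library.Multiset"
begin

text \<open>Tensors of order m and dimension n+1 are functions on index lists
  (i_1,...,i_m) with entries in {0..n}; outside this index set they are 0.\<close>

definition idx :: "nat \<Rightarrow> nat \<Rightarrow> nat list set" where
  "idx m n = {is. length is = m \<and> set is \<subseteq> {0..n}}"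

definition sym_tensor :: "nat \<Rightarrow> nat \<Rightarrow> (nat list \<Rightarrow> real) \<Rightarrow> bool" where
  "sym_tensor m n A \<longleftrightarrow>
     (\<forall>is\<in>idx m n. \<forall>js. mset js = mset is \<longrightarrow> A js = A is) \<and>
     (\<forall>is. is \<notin> idx m n \<longrightarrow> A is = 0)"

definition normalized_orthogonal :: "nat \<Rightarrow> (nat \<Rightarrow> nat \<Rightarrow> real) \<Rightarrow> bool" where
  "normalized_orthogonal n R \<longleftrightarrow>
     R 0 0 = 1 \<and> (\<forall>i\<in>{1..n}. R 0 i = 0 \<and> R i 0 = 0) \<and>
     (\<forall>i\<in>{1..n}. \<forall>j\<in>{1..n}. (\<Sum>k=1..n. R i k * R j k) = (if i = j then 1 else 0)) \<and>
     (\<forall>i\<in>{1..n}. \<forall>j\<in>{1..n}. (\<Sum>k=1..n. R k i * R k j) = (if i = j then 1 else 0))"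

definition tensor_transform ::
  "nat \<Rightarrow> nat \<Rightarrow> (nat \<Rightarrow> nat \<Rightarrow> real) \<Rightarrow> (nat list \<Rightarrow> real) \<Rightarrow> (nat list \<Rightarrow> real)" where
  "tensor_transform m n R A = (\<lambda>ls. if ls \<in> idx m n then
      (\<Sum>is\<in>idx m n. A is * (\<Prod>k<m. R (ls ! k) (is ! k))) else 0)"

definition tpow_entry :: "(nat \<Rightarrow> real) \<Rightarrow> nat list \<Rightarrow> real" where
  "tpow_entry u is = (\<Prod>k<length is. u (is ! k))"

definition completely_decomposable :: "nat \<Rightarrow> nat \<Rightarrow> (nat list \<Rightarrow> real) \<Rightarrow> bool" where
  "completely_decomposable m n A \<longleftrightarrow>
     (\<exists>(r::nat) (u::nat \<Rightarrow> nat \<Rightarrow> real).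
        \<forall>is\<in>idx m n. A is = (\<Sum>k<r. tpow_entry (u k) is))"

definition regular_vec :: "nat \<Rightarrow> (nat \<Rightarrow> real) \<Rightarrow> bool" where
  "regular_vec n x \<longleftrightarrow> x 0 \<noteq> 0 \<and> (x 0)\<^sup>2 = (\<Sum>i=1..n. (x i)\<^sup>2)"

definition regularly_decomposable :: "nat \<Rightarrow> nat \<Rightarrow> (nat list \<Rightarrow> real) \<Rightarrow> bool" where
  "regularly_decomposable m n A \<longleftrightarrow>
     (if even m then
        (\<exists>(r::nat) (u::nat \<Rightarrow> nat \<Rightarrow> real). (\<forall>k<r. regular_vec n (u k)) \<and>
           (\<forall>is\<in>idx m n. A is = (\<Sum>k<r. tpow_entry (u k) is)))
      else
        (\<exists>(r::nat) (u::nat \<Rightarrow> nat \<Rightarrow> real). (\<forall>k<r. regular_vec n (u k)) \<and>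
           (\<forall>is\<in>idx (m - 1) n. A (0 # is) = (\<Sum>k<r. tpow_entry (u k) is)) \<and>
           (\<forall>i\<in>{1..n}. \<forall>is\<in>idx (m - 1) n.
               A (i # is) = (\<Sum>k<r. u k i / u k 0 * tpow_entry (u k) is))))"

end

theory Submission
  imports Defs
begin

text \<open>Contracting every index of \<open>u\<^sup>\<otimes>\<^sup>m\<close> with \<open>R\<close> gives \<open>(R u)\<^sup>\<otimes>\<^sup>m\<close>, so \<open>R\<^sup>m\<close> maps a
  decomposition of \<open>A\<close> termwise to a decomposition of \<open>B\<close>. A normalized orthogonal \<open>R\<close>
  fixes the coordinate \<open>x\<^sub>0\<close> and preserves \<open>x\<^sub>0\<^sup>2 + \<dots> + x\<^sub>n\<^sup>2\<close>, hence preserves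
  regularity. In the odd case, the row tensor \<open>B\<^sub>l\<close> is \<open>\<Sum>\<^sub>j r\<^sub>l\<^sub>j R\<^sup>m\<^sup>-\<^sup>1 A\<^sub>j\<close>, and since
  \<open>R\<close> does not change \<open>u\<^sub>0\<close>, the weights \<open>u\<^sub>j/u\<^sub>0\<close> combine into \<open>(R u)\<^sub>l/(R u)\<^sub>0\<close>.
  The converse implications follow by applying this to the transpose of \<open>R\<close>, which
  inverts \<open>R\<^sup>m\<close>.\<close>

lemma finite_idx: "finite (idx m n)"
proof -
  have "idx m n = {xs. set xs \<subseteq> {0..n} \<and> length xs = m}" by (auto simp: idx_def)
  thus ?thesis using finite_lists_length_eq[of "{0..n}" m] by simp
qed

lemma idx_0: "idx 0 n = {[]}"
  by (auto simp: idx_def)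

lemma idx_Suc: "idx (Suc m) n = (\<lambda>(i, is). i # is) ` ({0..n} \<times> idx m n)"
  by (auto simp: idx_def length_Suc_conv image_iff)

lemma inj_on_Cons_pairs: "inj_on (\<lambda>(i, is). i # is) A"
  by (auto simp: inj_on_def)

lemma idx_nth_le: "xs \<in> idx m n \<Longrightarrow> k < m \<Longrightarrow> xs ! k \<le> n"
  by (auto simp: idx_def dest: nth_mem)

lemma sum_idx_prod:
  "(\<Sum>is\<in>idx m n. \<Prod>k<m. f k (is ! k)) = (\<Prod>k<m. \<Sum>i=0..n. (f k i :: real))"
proof (induction m arbitrary: f)
  case 0
  show ?case by (simp add: idx_0)
next
  case (Suc m)
  have "(\<Sum>is\<in>idx (Suc m) n. \<Prod>k<Suc m. f k (is ! k))
      = (\<Sum>(i, is)\<in>{0..n} \<times> idx m n. f 0 i * (\<Prod>k<m. f (Suc k) (is ! k)))"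
    unfolding idx_Suc sum.reindex[OF inj_on_Cons_pairs]
    by (rule sum.cong) (auto simp del: prod.lessThan_Suc simp add: prod.lessThan_Suc_shift)
  also have "\<dots> = (\<Sum>i=0..n. f 0 i) * (\<Prod>k<m. \<Sum>i=0..n. f (Suc k) i)"
    by (simp add: sum_product sum.cartesian_product split_def Suc.IH[symmetric])
  also have "\<dots> = (\<Prod>k<Suc m. \<Sum>i=0..n. f k i)"
    by (simp del: prod.lessThan_Suc add: prod.lessThan_Suc_shift)
  finally show ?case .
qed

lemma prod_nth_eq_indicator:
  assumes "length xs = m" "length ys = m"
  shows "(\<Prod>k<m. if xs ! k = ys ! k then 1 else 0 :: real) = (if xs = ys then 1 else 0)"
proof (cases "xs = ys")
  case False
  then obtain k where "k < m" "xs ! k \<noteq> ys ! k"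
    using assms by (auto simp: list_eq_iff_nth_eq)
  then show ?thesis using False by (intro trans[OF prod_zero]) auto
qed simp

definition mat_vec :: "nat \<Rightarrow> (nat \<Rightarrow> nat \<Rightarrow> real) \<Rightarrow> (nat \<Rightarrow> real) \<Rightarrow> nat \<Rightarrow> real" where
  "mat_vec n R u = (\<lambda>l. \<Sum>i=0..n. R l i * u i)"

lemma normalized_orthogonal_transpose:
  "normalized_orthogonal n R \<Longrightarrow> normalized_orthogonal n (\<lambda>i j. R j i)"
  by (auto simp: normalized_orthogonal_def)

lemma normalized_orthogonal_columns:
  assumes R: "normalized_orthogonal n R" and "i \<le> n" "j \<le> n"
  shows "(\<Sum>l=0..n. R l i * R l j) = (if i = j then 1 else 0)"
proof -
  have R00: "R 0 0 = 1" and border: "\<And>i. i \<in> {1..n} \<Longrightarrow> R 0 i = 0 \<and> R i 0 = 0"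
    and cols: "\<And>i j. i \<in> {1..n} \<Longrightarrow> j \<in> {1..n} \<Longrightarrow>
                 (\<Sum>l=1..n. R l i * R l j) = (if i = j then 1 else 0)"
    using R unfolding normalized_orthogonal_def by blast+
  have first_term: "(\<Sum>l=0..n. R l a * R l b) = R 0 a * R 0 b + (\<Sum>l=1..n. R l a * R l b)" for a b
    by (simp add: sum.atLeast_Suc_atMost)
  consider "i = 0" "j = 0" | "i = 0" "j \<in> {1..n}" | "i \<in> {1..n}" "j = 0" | "i \<in> {1..n}" "j \<in> {1..n}"
    using assms by fastforce
  then show ?thesis
  proof cases
    case 4
    then show ?thesis unfolding first_term using cols[of i j] by (simp add: border)
  qed (simp_all add: first_term R00 border sum.neutral)
qed

lemma mat_vec_0:
  assumes "normalized_orthogonal n R"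
  shows "mat_vec n R u 0 = u 0"
proof -
  have "mat_vec n R u 0 = R 0 0 * u 0 + (\<Sum>i=1..n. R 0 i * u i)"
    by (simp add: mat_vec_def sum.atLeast_Suc_atMost)
  also have "(\<Sum>i=1..n. R 0 i * u i) = 0"
    using assms by (auto simp: normalized_orthogonal_def)
  finally show ?thesis using assms by (simp add: normalized_orthogonal_def)
qed

lemma mat_vec_sum_squares:
  assumes R: "normalized_orthogonal n R"
  shows "(\<Sum>l=0..n. (mat_vec n R u l)\<^sup>2) = (\<Sum>l=0..n. (u l)\<^sup>2)"
proof -
  have "(\<Sum>l=0..n. (mat_vec n R u l)\<^sup>2) = (\<Sum>l=0..n. \<Sum>i=0..n. \<Sum>j=0..n. u i * u j * (R l i * R l j))"
    by (simp add: mat_vec_def power2_eq_square sum_product algebra_simps)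
  also have "\<dots> = (\<Sum>i=0..n. \<Sum>l=0..n. \<Sum>j=0..n. u i * u j * (R l i * R l j))"
    by (rule sum.swap)
  also have "\<dots> = (\<Sum>i=0..n. \<Sum>j=0..n. u i * u j * (\<Sum>l=0..n. R l i * R l j))"
    by (simp add: sum_distrib_left
        sum.swap[where A = "{0..n}" and B = "{0..n}" and g = "\<lambda>l j. u i * u j * (R l i * R l j)" for i])
  also have "\<dots> = (\<Sum>i=0..n. (u i)\<^sup>2)"
    by (simp add: normalized_orthogonal_columns[OF R] power2_eq_square if_distrib cong: if_cong)
  finally show ?thesis .
qed

lemma regular_vec_mat_vec:
  assumes R: "normalized_orthogonal n R" and u: "regular_vec n u"
  shows "regular_vec n (mat_vec n R u)"
proof -
  have first_term: "(\<Sum>l=0..n. (x l)\<^sup>2) = (x 0)\<^sup>2 + (\<Sum>l=1..n. (x l)\<^sup>2)" for x :: "nat \<Rightarrow> real"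
    by (simp add: sum.atLeast_Suc_atMost)
  show ?thesis
    using mat_vec_sum_squares[OF R, of u] first_term[of u] first_term[of "mat_vec n R u"] mat_vec_0[OF R] u
    by (simp add: regular_vec_def)
qed

lemma tensor_transform_tensor_power_sum:
  assumes "\<forall>is\<in>idx m n. A is = (\<Sum>k<r. c k * tpow_entry (u k) is)" and "ls \<in> idx m n"
  shows "tensor_transform m n R A ls = (\<Sum>k<r. c k * tpow_entry (mat_vec n R (u k)) ls)"
proof -
  have len: "length ls = m" using assms(2) by (simp add: idx_def)
  have "tensor_transform m n R A ls
      = (\<Sum>is\<in>idx m n. (\<Sum>k<r. c k * tpow_entry (u k) is) * (\<Prod>j<m. R (ls ! j) (is ! j)))"
    using assms by (simp add: tensor_transform_def)
  also have "\<dots> = (\<Sum>k<r. c k * (\<Sum>is\<in>idx m n. \<Prod>j<m. R (ls ! j) (is ! j) * u k (is ! j)))"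
    unfolding sum_distrib_right sum_distrib_left
    by (subst sum.swap) (auto simp: tpow_entry_def idx_def prod.distrib mult_ac intro!: sum.cong)
  also have "\<dots> = (\<Sum>k<r. c k * tpow_entry (mat_vec n R (u k)) ls)"
    by (simp add: sum_idx_prod[of "\<lambda>j i. R (ls ! j) i * u _ i"] tpow_entry_def len mat_vec_def)
  finally show ?thesis .
qed

lemma tensor_transform_decomposition:
  assumes "\<forall>is\<in>idx m n. A is = (\<Sum>k<r. tpow_entry (u k) is)"
  shows "\<forall>is\<in>idx m n. tensor_transform m n R A is = (\<Sum>k<r. tpow_entry (mat_vec n R (u k)) is)"
  using assms by (auto intro: tensor_transform_tensor_power_sum[where c = "\<lambda>_. 1", simplified])

lemma tensor_transform_transpose_inverse:
  assumes R: "normalized_orthogonal n R" and ls: "ls \<in> idx m n"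
  shows "tensor_transform m n (\<lambda>i j. R j i) (tensor_transform m n R A) ls = A ls"
proof -
  have delta: "(\<Sum>js\<in>idx m n. \<Prod>k<m. R (js ! k) (ls ! k) * R (js ! k) (is ! k))
      = (if ls = is then 1 else 0)" if "is": "is \<in> idx m n" for "is"
  proof -
    have "(\<Sum>js\<in>idx m n. \<Prod>k<m. R (js ! k) (ls ! k) * R (js ! k) (is ! k))
        = (\<Prod>k<m. \<Sum>j=0..n. R j (ls ! k) * R j (is ! k))"
      by (rule sum_idx_prod)
    also have "\<dots> = (\<Prod>k<m. if ls ! k = is ! k then 1 else 0)"
      by (intro prod.cong refl)
        (simp add: normalized_orthogonal_columns[OF R] idx_nth_le[OF ls] idx_nth_le[OF "is"])
    also have "\<dots> = (if ls = is then 1 else 0)"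
      using ls "is" by (simp add: prod_nth_eq_indicator idx_def)
    finally show ?thesis .
  qed
  have "tensor_transform m n (\<lambda>i j. R j i) (tensor_transform m n R A) ls
     = (\<Sum>is\<in>idx m n. A is * (\<Sum>js\<in>idx m n. \<Prod>k<m. R (js ! k) (ls ! k) * R (js ! k) (is ! k)))"
    using ls by (simp add: tensor_transform_def sum_distrib_right sum_distrib_left)
      (subst sum.swap, auto simp: prod.distrib mult_ac intro!: sum.cong)
  also have "\<dots> = (\<Sum>is\<in>idx m n. if ls = is then A is else 0)"
    by (intro sum.cong refl) (simp add: delta)
  also have "\<dots> = A ls"
    using ls by (simp add: finite_idx)
  finally show ?thesis .
qed

lemma tensor_transform_Cons:
  assumes "l \<le> n" "is \<in> idx m n"
  shows "tensor_transform (Suc m) n R A (l # is)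
     = (\<Sum>j=0..n. R l j * tensor_transform m n R (\<lambda>js. A (j # js)) is)"
proof -
  have "l # is \<in> idx (Suc m) n" using assms by (auto simp: idx_def)
  then have "tensor_transform (Suc m) n R A (l # is)
      = (\<Sum>(j, js)\<in>{0..n} \<times> idx m n. R l j * (A (j # js) * (\<Prod>k<m. R (is ! k) (js ! k))))"
    unfolding tensor_transform_def idx_Suc sum.reindex[OF inj_on_Cons_pairs]
    by (auto simp del: prod.lessThan_Suc simp add: prod.lessThan_Suc_shift intro!: sum.cong)
  also have "\<dots> = (\<Sum>j=0..n. R l j * tensor_transform m n R (\<lambda>js. A (j # js)) is)"
    using assms by (simp add: sum.cartesian_product sum_distrib_left split_def tensor_transform_def)
  finally show ?thesis .
qed

text \<open>The odd case of \<^const>\<open>regularly_decomposable\<close> with the conditions on \<open>A\<^sub>0\<close> and on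
  \<open>A\<^sub>1, \<dots>, A\<^sub>n\<close> merged, which is possible because \<open>u\<^sub>0/u\<^sub>0 = 1\<close> for regular \<open>u\<close>.\<close>

definition row_decomposition ::
  "nat \<Rightarrow> nat \<Rightarrow> (nat list \<Rightarrow> real) \<Rightarrow> nat \<Rightarrow> (nat \<Rightarrow> nat \<Rightarrow> real) \<Rightarrow> bool" where
  "row_decomposition m n A r u \<longleftrightarrow>
     (\<forall>j\<le>n. \<forall>is\<in>idx m n. A (j # is) = (\<Sum>k<r. u k j / u k 0 * tpow_entry (u k) is))"

lemma all_le_iff_zero_and_pos: "(\<forall>j\<le>n. P j) \<longleftrightarrow> P 0 \<and> (\<forall>i\<in>{1..n}. P (i :: nat))"
  by (metis atLeastAtMost_iff le0 not_one_le_zero linorder_not_less less_one)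

lemma regularly_decomposable_odd_iff:
  assumes "odd m"
  shows "regularly_decomposable m n A \<longleftrightarrow>
    (\<exists>r u. (\<forall>k<r. regular_vec n (u k)) \<and> row_decomposition (m - 1) n A r u)"
proof -
  have rows: "(\<forall>is\<in>idx (m - 1) n. A (0 # is) = (\<Sum>k<r. tpow_entry (u k) is)) \<and>
        (\<forall>i\<in>{1..n}. \<forall>is\<in>idx (m - 1) n. A (i # is) = (\<Sum>k<r. u k i / u k 0 * tpow_entry (u k) is))
        \<longleftrightarrow> row_decomposition (m - 1) n A r u"
    if reg: "\<forall>k<r. regular_vec n (u k)" for r u
  proof -
    have "(\<Sum>k<r. u k 0 / u k 0 * tpow_entry (u k) is) = (\<Sum>k<r. tpow_entry (u k) is)" for "is"
      using reg by (intro sum.cong refl) (simp add: regular_vec_def)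
    then show ?thesis
      unfolding row_decomposition_def all_le_iff_zero_and_pos by simp
  qed
  show ?thesis
    unfolding regularly_decomposable_def if_not_P[OF assms] by (intro ex_cong1) (use rows in blast)
qed

lemma completely_decomposable_cong:
  "(\<And>is. is \<in> idx m n \<Longrightarrow> A is = B is) \<Longrightarrow>
    completely_decomposable m n A \<longleftrightarrow> completely_decomposable m n B"
  unfolding completely_decomposable_def by auto

lemma row_decomposition_cong:
  assumes "\<And>is. is \<in> idx (Suc m) n \<Longrightarrow> A is = B is"
  shows "row_decomposition m n A r u \<longleftrightarrow> row_decomposition m n B r u"
proof -
  have "j # is \<in> idx (Suc m) n" if "j \<le> n" "is \<in> idx m n" for j "is"
    using that by (auto simp: idx_def)
  then show ?thesis
    unfolding row_decomposition_def using assms by auto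
qed

lemma regularly_decomposable_cong:
  assumes "\<And>is. is \<in> idx m n \<Longrightarrow> A is = B is"
  shows "regularly_decomposable m n A \<longleftrightarrow> regularly_decomposable m n B"
proof (cases "even m")
  case True
  then show ?thesis
    unfolding regularly_decomposable_def using assms by auto
next
  case False
  then have "Suc (m - 1) = m"
    by (simp add: odd_pos)
  then show ?thesis
    using row_decomposition_cong[of "m - 1" n A B] assms False
    by (simp add: regularly_decomposable_odd_iff)
qed

lemma completely_decomposable_tensor_transform:
  assumes "completely_decomposable m n A"
  shows "completely_decomposable m n (tensor_transform m n R A)"
proof -
  obtain r :: nat and u :: "nat \<Rightarrow> nat \<Rightarrow> real"
    where "\<forall>is\<in>idx m n. A is = (\<Sum>k<r. tpow_entry (u k) is)"
    using assms unfolding completely_decomposable_def by blast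
  from tensor_transform_decomposition[OF this] show ?thesis
    unfolding completely_decomposable_def by (intro exI)
qed

lemma row_decomposition_tensor_transform:
  assumes R: "normalized_orthogonal n R" and A: "row_decomposition m n A r u"
  shows "row_decomposition m n (tensor_transform (Suc m) n R A) r (\<lambda>k. mat_vec n R (u k))"
  unfolding row_decomposition_def
proof (intro allI impI ballI)
  fix l "is" assume l: "l \<le> n" and "is": "is \<in> idx m n"
  let ?v = "\<lambda>k. mat_vec n R (u k)"
  have row: "tensor_transform m n R (\<lambda>js. A (j # js)) is
      = (\<Sum>k<r. u k j / u k 0 * tpow_entry (?v k) is)" if "j \<le> n" for j
    by (rule tensor_transform_tensor_power_sum[OF _ "is"])
      (use A that in \<open>simp add: row_decomposition_def\<close>)
  have "tensor_transform (Suc m) n R A (l # is)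
      = (\<Sum>j=0..n. R l j * tensor_transform m n R (\<lambda>js. A (j # js)) is)"
    by (rule tensor_transform_Cons[OF l "is"])
  also have "\<dots> = (\<Sum>j=0..n. R l j * (\<Sum>k<r. u k j / u k 0 * tpow_entry (?v k) is))"
    by (simp add: row)
  also have "\<dots> = (\<Sum>k<r. (\<Sum>j=0..n. R l j * u k j) / u k 0 * tpow_entry (?v k) is)"
    by (simp add: sum_distrib_left sum_distrib_right sum_divide_distrib mult_ac sum.swap[of _ "{0..n}"])
  also have "\<dots> = (\<Sum>k<r. ?v k l / ?v k 0 * tpow_entry (?v k) is)"
    by (simp only: mat_vec_0[OF R]) (simp add: mat_vec_def)
  finally show "tensor_transform (Suc m) n R A (l # is) = (\<Sum>k<r. ?v k l / ?v k 0 * tpow_entry (?v k) is)" .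
qed

lemma regularly_decomposable_tensor_transform:
  assumes R: "normalized_orthogonal n R" and A: "regularly_decomposable m n A"
  shows "regularly_decomposable m n (tensor_transform m n R A)"
proof (cases "even m")
  case True
  then obtain r :: nat and u :: "nat \<Rightarrow> nat \<Rightarrow> real" where reg: "\<forall>k<r. regular_vec n (u k)"
    and dec: "\<forall>is\<in>idx m n. A is = (\<Sum>k<r. tpow_entry (u k) is)"
    using A unfolding regularly_decomposable_def if_P[OF True] by blast
  note tensor_transform_decomposition[OF dec]
  moreover have "\<forall>k<r. regular_vec n (mat_vec n R (u k))"
    using reg regular_vec_mat_vec[OF R] by blast
  ultimately show ?thesis
    unfolding regularly_decomposable_def if_P[OF True] by (intro exI conjI)
next
  case False
  then obtain r :: nat and u :: "nat \<Rightarrow> nat \<Rightarrow> real"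
    where reg: "\<forall>k<r. regular_vec n (u k)" and rows: "row_decomposition (m - 1) n A r u"
    using A by (auto simp: regularly_decomposable_odd_iff)
  have "\<forall>k<r. regular_vec n (mat_vec n R (u k))"
    using reg regular_vec_mat_vec[OF R] by blast
  moreover have "row_decomposition (m - 1) n (tensor_transform m n R A) r (\<lambda>k. mat_vec n R (u k))"
    using row_decomposition_tensor_transform[OF R rows] False by (simp add: odd_pos)
  ultimately show ?thesis
    unfolding regularly_decomposable_odd_iff[OF False] by (intro exI conjI)
qed

theorem theorem4p1:
  fixes n m :: nat and R :: "nat \<Rightarrow> nat \<Rightarrow> real" and A :: "nat list \<Rightarrow> real"
  assumes "n \<ge> 2" and "m \<ge> 1"
    and "normalized_orthogonal n R"
    and "sym_tensor m n A"
  shows "(completely_decomposable m n A \<longleftrightarrow>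
            completely_decomposable m n (tensor_transform m n R A)) \<and>
         (regularly_decomposable m n A \<longleftrightarrow>
            regularly_decomposable m n (tensor_transform m n R A))"
proof -
  note R = \<open>normalized_orthogonal n R\<close>
  note R' = normalized_orthogonal_transpose[OF R]
  let ?B = "tensor_transform m n R A"
  have undo: "\<And>xs. xs \<in> idx m n \<Longrightarrow> tensor_transform m n (\<lambda>i j. R j i) ?B xs = A xs"
    by (rule tensor_transform_transpose_inverse[OF R])
  show ?thesis
  proof (intro conjI iffI)
    show "completely_decomposable m n ?B" if "completely_decomposable m n A"
      using that by (rule completely_decomposable_tensor_transform)
    show "completely_decomposable m n A" if "completely_decomposable m n ?B"
      using completely_decomposable_tensor_transform[OF that, of "\<lambda>i j. R j i"]
        completely_decomposable_cong[of m n _ A, OF undo] by blast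
    show "regularly_decomposable m n ?B" if "regularly_decomposable m n A"
      using that by (rule regularly_decomposable_tensor_transform[OF R])
    show "regularly_decomposable m n A" if "regularly_decomposable m n ?B"
      using regularly_decomposable_tensor_transform[OF R' that]
        regularly_decomposable_cong[of m n _ A, OF undo] by blast
  qed
qed

end
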